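(* Let $m\ge1$, let $\mathbf b\in\mathbb R^{2m}$ be a fixed unit vector, and fix pairwise distinct times $t_1,\dots,t_{m(2m+1)}\in[0,\infty)$. For all $(C,B)\in\mathcal G_G$ outside a set of measure zero (with respect to the measure on $\mathcal G_G$ described below), with $X_t:=e^{tC}$, the maps $$\mathbb S_{2m}(\mathbb R)\ni\Gamma\mapsto\big(\mathbf b^T X_{t_k}\Gamma X_{t_k}^T\mathbf b\big)_{k=1}^{m(2m+1)}\in\mathbb R^{m(2m+1)}$$ and $$\mathbb R^{2m}\ni\mathbf d\mapsto\big(\mathbf b^T X_{t_k}\mathbf d\big)_{k=1}^{2m}\in\mathbb R^{2m}$$ are injective.
   Context: Let $\Omega=\begin{pmatrix}0&I_m\\-I_m&0\end{pmatrix}$. $\mathcal G_G\subset\mathbb M_{2m}(\mathbb R)\times\mathbb S_{2m}(\mathbb R)$ is the set of pairs $(C,B)$ such that, writing $C=(A-H)\Omega$ with $A^T=-A$ and $H^T=H$ (this decomposition is unique), the Hermitian matrix $iA+B$ is positive semidefinite. These pairs parametrize Gaussian quantum dynamical semigroups $(X_t,Y_t)_{t\ge0}$ with $X_t=e^{tC}$, $Y_t=2\int_0^tX_s^T\Omega^TB\Omega X_s\,ds$. The measure on $\mathcal G_G$ is the restriction of Lebesgue measure on $\mathbb M_{2m}(\mathbb R)\times\mathbb S_{2m}(\mathbb R)\cong\mathbb R^{4m^2}\times\mathbb R^{m(2m+1)}$ (entries of $C$ and upper-triangular entries of $B$ as coordinates). *)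

theory Defs
  imports "HOL-Analysis.Analysis"
begin

text \<open>Square matrices of size n are represented as functions nat => nat => 'a,
  only entries with indices below n being relevant; vectors as nat => 'a.\<close>

definition mmult :: "nat \<Rightarrow> (nat \<Rightarrow> nat \<Rightarrow> 'a::comm_semiring_1) \<Rightarrow> (nat \<Rightarrow> nat \<Rightarrow> 'a) \<Rightarrow> nat \<Rightarrow> nat \<Rightarrow> 'a" where
  "mmult n A B = (\<lambda>i j. \<Sum>k<n. A i k * B k j)"

definition mident :: "nat \<Rightarrow> nat \<Rightarrow> 'a::comm_semiring_1" where
  "mident = (\<lambda>i j. if i = j then 1 else 0)"

fun mpow :: "nat \<Rightarrow> (nat \<Rightarrow> nat \<Rightarrow> 'a::comm_semiring_1) \<Rightarrow> nat \<Rightarrow> nat \<Rightarrow> nat \<Rightarrow> 'a" where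
  "mpow n A 0 = mident"
| "mpow n A (Suc k) = mmult n A (mpow n A k)"

definition mexp :: "nat \<Rightarrow> (nat \<Rightarrow> nat \<Rightarrow> real) \<Rightarrow> nat \<Rightarrow> nat \<Rightarrow> real" where
  "mexp n A = (\<lambda>i j. \<Sum>k. mpow n A k i j / fact k)"

definition mtrans :: "(nat \<Rightarrow> nat \<Rightarrow> 'a) \<Rightarrow> nat \<Rightarrow> nat \<Rightarrow> 'a" where
  "mtrans A = (\<lambda>i j. A j i)"

text \<open>The symplectic matrix Omega = [[0, I_m], [-I_m, 0]] of size 2m.\<close>
definition Omega :: "nat \<Rightarrow> nat \<Rightarrow> nat \<Rightarrow> real" where
  "Omega m = (\<lambda>i j. if i < m \<and> j = i + m then 1
                    else if m \<le> i \<and> i < 2*m \<and> j = i - m then -1 else 0)"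

definition herm_psd :: "nat \<Rightarrow> (nat \<Rightarrow> nat \<Rightarrow> complex) \<Rightarrow> bool" where
  "herm_psd n M \<longleftrightarrow>
     (\<forall>i<n. \<forall>j<n. M j i = cnj (M i j)) \<and>
     (\<forall>z::nat \<Rightarrow> complex. let q = (\<Sum>i<n. \<Sum>j<n. cnj (z i) * M i j * z j)
                          in Im q = 0 \<and> Re q \<ge> 0)"

definition in_GG :: "nat \<Rightarrow> (nat \<Rightarrow> nat \<Rightarrow> real) \<Rightarrow> (nat \<Rightarrow> nat \<Rightarrow> real) \<Rightarrow> bool" where
  "in_GG m C B \<longleftrightarrow>
     (\<forall>i<2*m. \<forall>j<2*m. B i j = B j i) \<and>
     (\<exists>A H. (\<forall>i<2*m. \<forall>j<2*m. A j i = - A i j \<and> H j i = H i j) \<and>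
            (\<forall>i<2*m. \<forall>j<2*m. C i j = mmult (2*m) (\<lambda>a b. A a b - H a b) (Omega m) i j) \<and>
            herm_psd (2*m) (\<lambda>i j. \<i> * complex_of_real (A i j) + complex_of_real (B i j)))"

text \<open>Coordinates on M_{2m}(R) x S_{2m}(R): Inl (i,j) for entry (i,j) of C,
  Inr (i,j) with i <= j for the upper-triangular entry (i,j) of B.\<close>
definition coord_index :: "nat \<Rightarrow> ((nat \<times> nat) + (nat \<times> nat)) set" where
  "coord_index m = Inl ` ({..<2*m} \<times> {..<2*m}) \<union> Inr ` {(i,j). i \<le> j \<and> j < 2*m}"

definition coord_measure :: "nat \<Rightarrow> ((nat \<times> nat) + (nat \<times> nat) \<Rightarrow> real) measure" where
  "coord_measure m = PiM (coord_index m) (\<lambda>_. lborel)"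

definition Cmat :: "((nat \<times> nat) + (nat \<times> nat) \<Rightarrow> real) \<Rightarrow> nat \<Rightarrow> nat \<Rightarrow> real" where
  "Cmat p = (\<lambda>i j. p (Inl (i, j)))"

definition Bmat :: "((nat \<times> nat) + (nat \<times> nat) \<Rightarrow> real) \<Rightarrow> nat \<Rightarrow> nat \<Rightarrow> real" where
  "Bmat p = (\<lambda>i j. p (Inr (min i j, max i j)))"

definition Xt :: "nat \<Rightarrow> (nat \<Rightarrow> nat \<Rightarrow> real) \<Rightarrow> real \<Rightarrow> nat \<Rightarrow> nat \<Rightarrow> real" where
  "Xt m C t = mexp (2*m) (\<lambda>i j. t * C i j)"

definition sym_mats :: "nat \<Rightarrow> (nat \<Rightarrow> nat \<Rightarrow> real) set" where
  "sym_mats n = {G. (\<forall>i j. G i j = G j i) \<and> (\<forall>i j. n \<le> i \<or> n \<le> j \<longrightarrow> G i j = 0)}"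

definition vecs :: "nat \<Rightarrow> (nat \<Rightarrow> real) set" where
  "vecs n = {d. \<forall>i. n \<le> i \<longrightarrow> d i = 0}"

definition bilin :: "nat \<Rightarrow> (nat \<Rightarrow> real) \<Rightarrow> (nat \<Rightarrow> nat \<Rightarrow> real) \<Rightarrow> (nat \<Rightarrow> real) \<Rightarrow> real" where
  "bilin n b M v = (\<Sum>i<n. \<Sum>j<n. b i * M i j * v j)"

end

theory Submission
  imports Defs "Jordan_Normal_Form.Determinant" "HOL-Complex_Analysis.Complex_Analysis"
begin

text \<open>Write \<open>X\<^sub>k = exp (t\<^sub>k C)\<close>. Both maps are linear, and each is injective iff a square matrix
  is nonsingular: its rows are the coefficients of \<open>d \<mapsto> b\<^sup>T X\<^sub>k d\<close>, resp. of
  \<open>\<Gamma> \<mapsto> b\<^sup>T X\<^sub>k \<Gamma> X\<^sub>k\<^sup>T b\<close> in a basis of the symmetric matrices. The product of the two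
  determinants extends to a function of the complexified entries of \<open>C\<close> that is entire in
  each entry separately. Such a function vanishes either identically or only on a Lebesgue
  null set (induction over the coordinates, Fubini, and the isolated zeros of entire functions
  of one variable).

  It remains to find one \<open>C\<close> with nonzero determinant. Take \<open>C = H diag(\<mu>) H\<close> with
  \<open>\<mu>\<^sub>a = 2\<^sup>a\<close>, where \<open>H\<close> is the Householder reflection with \<open>b\<^sup>T H = w\<^sup>T\<close> for the constant unit
  vector \<open>w\<close>. Then \<open>b\<^sup>T X\<^sub>k = w\<^sup>T diag(exp (t\<^sub>k \<mu>)) H\<close>, so the observations are exponential sums
  in \<open>t\<^sub>k\<close> with the exponents \<open>\<mu>\<^sub>a\<close>, resp. \<open>\<mu>\<^sub>a + \<mu>\<^sub>c\<close> for \<open>a \<le> c\<close>. These exponents are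
  distinct, and an exponential sum with distinct exponents that vanishes at as many points as
  it has terms is zero.\<close>

section \<open>Exponential sums\<close>

lemma Rolle_card_zeros:
  fixes f f' :: "real \<Rightarrow> real"
  assumes der: "\<And>x. (f has_real_derivative f' x) (at x)"
    and "finite S" "card S = Suc k" "\<forall>s\<in>S. f s = 0"
  shows "\<exists>S'. finite S' \<and> card S' = k \<and> S' \<subseteq> {..<Max S} \<and> (\<forall>s\<in>S'. f' s = 0)"
  using assms(2-)
proof (induction k arbitrary: S)
  case 0
  then show ?case by (intro exI[of _ "{}"]) auto
next
  case (Suc k)
  define S0 where "S0 = S - {Max S}"
  have "S \<noteq> {}" using Suc.prems by auto
  then have MS: "Max S \<in> S" using Suc.prems by simp
  have S0: "finite S0" "card S0 = Suc k" "\<forall>s\<in>S0. f s = 0"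
    using Suc.prems MS by (auto simp: S0_def)
  obtain S0' where S0': "finite S0'" "card S0' = k" "S0' \<subseteq> {..<Max S0}" "\<forall>s\<in>S0'. f' s = 0"
    using Suc.IH[OF S0] by blast
  have "S0 \<noteq> {}" using S0 by auto
  then have M0: "Max S0 \<in> S0" using S0 by simp
  then have lt: "Max S0 < Max S"
    using Suc.prems(1) unfolding S0_def by (metis DiffE Max_ge insertI1 order_le_neq_trans)
  have "f (Max S0) = f (Max S)" using S0(3) M0 Suc.prems(3) MS by auto
  moreover have "continuous_on {Max S0..Max S} f"
    by (rule continuous_at_imp_continuous_on) (meson DERIV_isCont der)
  ultimately obtain z where z: "Max S0 < z" "z < Max S" "(\<lambda>v. f' z * v) = (\<lambda>v. 0)"
    using Rolle_deriv[OF lt, of f "\<lambda>x v. f' x * v"] der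
    unfolding has_field_derivative_def by (metis mult.commute)
  have "z \<notin> S0'" using S0'(3) z(1) by auto
  moreover have "f' z = 0" using fun_cong[OF z(3), of 1] by simp
  ultimately show ?case
    using S0' z lt by (intro exI[of _ "insert z S0'"]) auto
qed

text \<open>Dividing by \<open>exp (\<mu> p\<^sub>0 s)\<close> and differentiating removes the term of \<open>p\<^sub>0\<close>
  at the cost of one zero (Rolle).\<close>

lemma exp_sum_eq_0_imp_coeffs_eq_0:
  fixes c \<mu> :: "'p \<Rightarrow> real"
  assumes "finite P" "inj_on \<mu> P" "finite S" "card P \<le> card S"
    and "\<And>s. s \<in> S \<Longrightarrow> (\<Sum>p\<in>P. c p * exp (\<mu> p * s)) = 0"
  shows "\<forall>p\<in>P. c p = 0"
  using assms
proof (induction P arbitrary: c \<mu> S rule: finite_induct)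
  case empty
  then show ?case by simp
next
  case (insert p0 P)
  define h where "h s = c p0 + (\<Sum>p\<in>P. c p * exp ((\<mu> p - \<mu> p0) * s))" for s
  define h' where "h' s = (\<Sum>p\<in>P. c p * (\<mu> p - \<mu> p0) * exp ((\<mu> p - \<mu> p0) * s))" for s
  have h_eq: "h s = exp (- \<mu> p0 * s) * (\<Sum>p\<in>insert p0 P. c p * exp (\<mu> p * s))" for s
  proof -
    have e: "exp (- \<mu> p0 * s) * (c p * exp (\<mu> p * s)) = c p * exp ((\<mu> p - \<mu> p0) * s)" for p
    proof -
      have "(\<mu> p - \<mu> p0) * s = \<mu> p * s + (- \<mu> p0 * s)" by (simp add: algebra_simps)
      then show ?thesis by (simp only: exp_add mult_ac)
    qed
    show ?thesis
      by (simp only: h_def sum.insert[OF insert.hyps] distrib_left sum_distrib_left e) simp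
  qed
  have hS: "\<forall>s\<in>S. h s = 0" using insert.prems(4) by (simp add: h_eq)
  have der: "(h has_real_derivative h' x) (at x)" for x
    unfolding h_def h'_def by (auto intro!: derivative_eq_intros simp: algebra_simps)
  obtain k where k: "card S = Suc k" and kP: "card P \<le> k"
    using insert.prems(3) insert.hyps by (cases "card S") auto
  obtain S' where S': "finite S'" "card S' = k" "\<forall>s\<in>S'. h' s = 0"
    using Rolle_card_zeros[OF der insert.prems(2) k hS] by blast
  have "inj_on (\<lambda>p. \<mu> p - \<mu> p0) P" using insert.prems(1) by (auto simp: inj_on_def)
  then have "\<forall>p\<in>P. c p * (\<mu> p - \<mu> p0) = 0"
    using insert.IH[of "\<lambda>p. \<mu> p - \<mu> p0" S' "\<lambda>p. c p * (\<mu> p - \<mu> p0)"] S' kP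
    by (auto simp: h'_def)
  moreover have "\<forall>p\<in>P. \<mu> p \<noteq> \<mu> p0"
    using insert.prems(1) insert.hyps(2) by (auto simp: inj_on_def)
  ultimately have cP: "\<forall>p\<in>P. c p = 0" by auto
  have "S \<noteq> {}" using k by auto
  then obtain s where "s \<in> S" by blast
  then have "h s = 0" using hS by blast
  then have "c p0 = 0" using cP by (simp add: h_def)
  with cP show ?case by simp
qed

section \<open>Null sets of zeros of separately entire functions\<close>

lemma null_sets_lborel_real_zeros_entire:
  fixes h :: "complex \<Rightarrow> complex"
  assumes hol: "h holomorphic_on UNIV" and nz: "h w0 \<noteq> 0"
  shows "{s::real. h (of_real s) = 0} \<in> null_sets lborel"
proof -
  let ?K = "{s::real. h (of_real s) = 0}"
  have "countable (of_real ` ?K :: complex set)"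
  proof (rule no_limpt_imp_countable)
    fix \<xi> show "\<not> \<xi> islimpt (of_real ` ?K :: complex set)"
    proof
      assume "\<xi> islimpt (of_real ` ?K :: complex set)"
      then have "h w0 = 0"
        by (rule analytic_continuation[OF hol open_UNIV connected_UNIV subset_UNIV UNIV_I _ _ UNIV_I]) auto
      with nz show False by simp
    qed
  qed
  then have "countable (Re ` of_real ` ?K)" by simp
  then show ?thesis by (simp add: image_image countable_imp_null_set_lborel)
qed

lemma null_sets_PiM_insert_if_null_sections:
  fixes Z :: "('i \<Rightarrow> real) set"
  assumes I: "finite I" "a \<notin> I" and Z: "Z \<in> sets (PiM (insert a I) (\<lambda>_. lborel))"
    and sections: "AE y in PiM I (\<lambda>_. lborel). \<exists>N\<in>null_sets lborel. {s. y(a := s) \<in> Z} \<subseteq> N"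
  shows "Z \<in> null_sets (PiM (insert a I) (\<lambda>_. lborel))"
proof -
  have "emeasure (PiM (insert a I) (\<lambda>_. lborel)) Z =
      (\<integral>\<^sup>+ y. (\<integral>\<^sup>+ s. indicator Z (y(a := s)) \<partial>lborel) \<partial>PiM I (\<lambda>_. lborel))"
    using product_sigma_finite.product_nn_integral_insert[of "\<lambda>_. lborel" I a "indicator Z"] Z I
    by (simp add: product_sigma_finite_def sigma_finite_lborel nn_integral_indicator)
  also have "\<dots> = (\<integral>\<^sup>+ y. 0 \<partial>PiM I (\<lambda>_. lborel :: real measure))"
  proof (rule nn_integral_cong_AE)
    show "AE y in PiM I (\<lambda>_. lborel). (\<integral>\<^sup>+ s. indicator Z (y(a := s)) \<partial>lborel) = 0"
      using sections
    proof eventually_elim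
      case (elim y)
      then obtain N where N: "N \<in> null_sets lborel" "{s. y(a := s) \<in> Z} \<subseteq> N" by blast
      have "(\<integral>\<^sup>+ s. indicator Z (y(a := s)) \<partial>lborel) \<le> (\<integral>\<^sup>+ s. indicator N s \<partial>lborel)"
        using N(2) by (intro nn_integral_mono) (auto simp: indicator_def)
      also have "\<dots> = 0" using N(1) by (subst nn_integral_indicator) auto
      finally show ?case by simp
    qed
  qed
  finally show ?thesis using Z by (auto intro: null_setsI)
qed

lemma borel_measurable_PiM_fun_upd:
  assumes "f \<in> borel_measurable (PiM (insert a I) (\<lambda>_. lborel :: real measure))"
  shows "(\<lambda>x. f (x(a := c))) \<in> borel_measurable (PiM I (\<lambda>_. lborel :: real measure))"
proof -
  have "(\<lambda>x. x(a := c)) \<in> measurable (PiM I (\<lambda>_. lborel)) (PiM (insert a I) (\<lambda>_. lborel))"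
    by (rule measurable_fun_upd[where J=I]) auto
  then show ?thesis using measurable_comp assms unfolding comp_def by blast
qed

lemma null_sets_zeros_separately_entire:
  fixes I :: "'i set" and G :: "('i \<Rightarrow> complex) \<Rightarrow> complex"
  assumes "finite I"
    and "\<And>z a. (\<lambda>w. G (z(a := w))) holomorphic_on UNIV"
    and "(\<lambda>x. G (\<lambda>i. of_real (x i))) \<in> borel_measurable (PiM I (\<lambda>_. lborel))"
    and "x0 \<in> PiE I (\<lambda>_. UNIV)" "G (\<lambda>i. of_real (x0 i)) \<noteq> 0"
  shows "{x \<in> space (PiM I (\<lambda>_. lborel)). G (\<lambda>i. of_real (x i)) = 0} \<in> null_sets (PiM I (\<lambda>_. lborel))"
  using assms
proof (induction I arbitrary: G x0 rule: finite_induct)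
  case empty
  then have "x0 = (\<lambda>_. undefined)" by auto
  with empty have "{x \<in> space (PiM {} (\<lambda>_. lborel)). G (\<lambda>i. of_real (x i)) = 0} = {}"
    by (auto simp: space_PiM_empty)
  then show ?case by (metis null_sets.empty_sets)
next
  case (insert a I)
  let ?M = "PiM I (\<lambda>_. lborel) :: ('i \<Rightarrow> real) measure"
  let ?M' = "PiM (insert a I) (\<lambda>_. lborel) :: ('i \<Rightarrow> real) measure"
  define g where "g x = G (\<lambda>i. of_real (x i))" for x
  define G' where "G' z = G (z(a := of_real (x0 a)))" for z
  have upd: "(\<lambda>i. complex_of_real ((x(a := s)) i)) = (\<lambda>i. of_real (x i))(a := of_real s)" for x s
    by auto
  have hol': "(\<lambda>w. G' (z(b := w))) holomorphic_on UNIV" for z b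
  proof (cases "b = a")
    case False
    show ?thesis
      unfolding G'_def fun_upd_twist[OF False] by (rule insert.prems(1))
  qed (simp add: G'_def)
  have m': "(\<lambda>x. G' (\<lambda>i. of_real (x i))) \<in> borel_measurable ?M"
    using borel_measurable_PiM_fun_upd[OF insert.prems(2), where c="x0 a"]
    unfolding G'_def by (simp only: upd)
  have "(\<lambda>i. complex_of_real ((x0(a := undefined)) i))(a := of_real (x0 a)) = (\<lambda>i. of_real (x0 i))"
    by auto
  then have "G' (\<lambda>i. of_real ((x0(a := undefined)) i)) \<noteq> 0"
    using insert.prems(4) by (simp add: G'_def)
  moreover have "x0(a := undefined) \<in> PiE I (\<lambda>_. UNIV)"
    using insert.prems(3) insert.hyps(2) by (auto simp: PiE_def extensional_def)
  ultimately have "{x \<in> space ?M. G' (\<lambda>i. of_real (x i)) = 0} \<in> null_sets ?M"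
    using insert.IH hol' m' by blast
  then have "AE y in ?M. G' (\<lambda>i. of_real (y i)) \<noteq> 0"
    by (rule AE_I') auto
  then have "AE y in ?M. \<exists>N\<in>null_sets lborel. {s. y(a := s) \<in> {x \<in> space ?M'. g x = 0}} \<subseteq> N"
  proof eventually_elim
    case (elim y)
    then have "{s. G ((\<lambda>i. of_real (y i))(a := of_real s)) = 0} \<in> null_sets lborel"
      using null_sets_lborel_real_zeros_entire[OF insert.prems(1)[of "\<lambda>i. of_real (y i)" a], of "of_real (x0 a)"]
      by (simp add: G'_def fun_upd_def)
    moreover have "{s. y(a := s) \<in> {x \<in> space ?M'. g x = 0}} \<subseteq> {s. G ((\<lambda>i. of_real (y i))(a := of_real s)) = 0}"
      unfolding g_def by (simp only: mem_Collect_eq upd) blast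
    ultimately show ?case by blast
  qed
  moreover have "{x \<in> space ?M'. g x = 0} \<in> sets ?M'"
    using measurable_sets[OF insert.prems(2), of "{0}"] unfolding g_def
    by (simp add: vimage_def Int_def conj_commute)
  ultimately show ?case
    using null_sets_PiM_insert_if_null_sections[OF insert.hyps] by (simp add: g_def)
qed

section \<open>Matrix powers and exponentials\<close>

definition cmexp :: "nat \<Rightarrow> (nat \<Rightarrow> nat \<Rightarrow> complex) \<Rightarrow> nat \<Rightarrow> nat \<Rightarrow> complex" where
  "cmexp n A = (\<lambda>i j. \<Sum>k. mpow n A k i j / fact k)"

lemma mpow_of_real:
  "mpow n (\<lambda>i j. of_real (A i j)) k i j = (of_real (mpow n A k i j) :: 'a::{real_algebra_1,comm_ring_1})"
  by (induction k arbitrary: i j) (simp_all add: mident_def mmult_def)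

lemma mpow_cong:
  assumes "\<And>i j. i < n \<Longrightarrow> j < n \<Longrightarrow> A i j = A' i j" "i < n"
  shows "mpow n A k i j = mpow n A' k i j"
  using assms(2) by (induction k arbitrary: i j) (simp_all add: mmult_def assms(1))

lemma mexp_cong:
  assumes "\<And>i j. i < n \<Longrightarrow> j < n \<Longrightarrow> A i j = A' i j" "i < n"
  shows "mexp n A i j = mexp n A' i j"
  unfolding mexp_def using mpow_cong[OF assms] by simp

lemma norm_mpow_le:
  fixes A :: "nat \<Rightarrow> nat \<Rightarrow> 'a::real_normed_field"
  assumes R: "\<And>i j. i < n \<Longrightarrow> j < n \<Longrightarrow> norm (A i j) \<le> R" and i: "i < n"
  shows "norm (mpow n A k i j) \<le> (real n * R) ^ k"
  using i
proof (induction k arbitrary: i j)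
  case 0
  then show ?case by (simp add: mident_def)
next
  case (Suc k)
  have R0: "0 \<le> R" using R[OF Suc.prems Suc.prems] norm_ge_zero order_trans by blast
  have "norm (mpow n A (Suc k) i j) \<le> (\<Sum>l<n. norm (A i l) * norm (mpow n A k l j))"
    by (simp add: mmult_def norm_mult order_trans[OF norm_sum])
  also have "\<dots> \<le> (\<Sum>l<n. R * (real n * R) ^ k)"
    by (intro sum_mono mult_mono R Suc.prems Suc.IH) (simp_all add: R0)
  finally show ?case by simp
qed

lemma norm_entry_le_sum:
  fixes A :: "nat \<Rightarrow> nat \<Rightarrow> 'a::real_normed_vector"
  assumes "i < n" "j < n"
  shows "norm (A i j) \<le> (\<Sum>a<n. \<Sum>b<n. norm (A a b))"
proof -
  have "norm (A i j) \<le> (\<Sum>b<n. norm (A i b))"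
    using assms by (intro member_le_sum) auto
  also have "\<dots> \<le> (\<Sum>a<n. \<Sum>b<n. norm (A a b))"
    using assms by (intro member_le_sum[where f="\<lambda>a. \<Sum>b<n. norm (A a b)"]) (auto intro: sum_nonneg)
  finally show ?thesis .
qed

lemma summable_pow_divide_fact: "summable (\<lambda>k. (x::real) ^ k / fact k)"
  using summable_exp[of x] by (simp add: field_simps)

lemma summable_mpow_divide_fact:
  fixes A :: "nat \<Rightarrow> nat \<Rightarrow> 'a::{real_normed_field,banach}"
  assumes "i < n"
  shows "summable (\<lambda>k. mpow n A k i j / fact k)"
proof (rule summable_comparison_test'[OF summable_pow_divide_fact])
  fix k :: nat
  let ?R = "\<Sum>a<n. \<Sum>b<n. norm (A a b)"
  have "norm (mpow n A k i j / fact k) = norm (mpow n A k i j) / fact k"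
    by (simp add: norm_divide norm_fact)
  also have "\<dots> \<le> (real n * ?R) ^ k / fact k"
    by (intro divide_right_mono norm_mpow_le norm_entry_le_sum assms) auto
  finally show "norm (mpow n A k i j / fact k) \<le> (real n * ?R) ^ k / fact k" .
qed

lemma cmexp_of_real:
  assumes "i < n"
  shows "cmexp n (\<lambda>i j. of_real (A i j)) i j = of_real (mexp n A i j)"
proof -
  have "(\<lambda>k. mpow n A k i j / fact k) sums mexp n A i j"
    unfolding mexp_def using summable_sums[OF summable_mpow_divide_fact[OF assms]] .
  then have "(\<lambda>k. complex_of_real (mpow n A k i j / fact k)) sums of_real (mexp n A i j)"
    by (rule sums_of_real)
  then show ?thesis
    unfolding cmexp_def by (simp add: sums_iff mpow_of_real)
qed

lemma mpow_holomorphic: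
  assumes "\<And>i j. (\<lambda>w. A w i j) holomorphic_on UNIV"
  shows "(\<lambda>w. mpow n (A w) k i j) holomorphic_on UNIV"
  by (induction k arbitrary: i j)
    (simp_all add: mident_def mmult_def holomorphic_on_sum holomorphic_on_mult assms)

lemma cmexp_affine_holomorphic:
  fixes A B :: "nat \<Rightarrow> nat \<Rightarrow> complex"
  assumes "i < n"
  shows "(\<lambda>w. cmexp n (\<lambda>a b. A a b + B a b * w) i j) holomorphic_on UNIV"
  unfolding cmexp_def
proof (rule holomorphic_uniform_sequence[OF open_UNIV])
  let ?A = "\<lambda>w a b. A a b + B a b * w"
  fix N
  show "(\<lambda>w. \<Sum>k<N. mpow n (?A w) k i j / fact k) holomorphic_on UNIV"
    by (intro holomorphic_on_sum holomorphic_on_divide mpow_holomorphic holomorphic_intros) auto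
next
  let ?A = "\<lambda>w a b. A a b + B a b * w"
  fix w0 :: complex
  let ?R = "\<Sum>a<n. \<Sum>b<n. norm (A a b) + norm (B a b) * (norm w0 + 1)"
  have "uniform_limit (cball w0 1) (\<lambda>N w. \<Sum>k<N. mpow n (?A w) k i j / fact k)
          (\<lambda>w. \<Sum>k. mpow n (?A w) k i j / fact k) sequentially"
  proof (rule Weierstrass_m_test[OF _ summable_pow_divide_fact[of "real n * ?R"]])
    fix k w assume "w \<in> cball w0 1"
    then have nw: "norm w \<le> norm w0 + 1"
      using norm_triangle_sub[of w w0] by (auto simp: dist_norm norm_minus_commute)
    have bnd: "norm (?A w a b) \<le> ?R" if "a < n" "b < n" for a b
    proof -
      have "norm (?A w a b) \<le> norm (A a b) + norm (B a b) * (norm w0 + 1)"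
        by (rule order_trans[OF norm_triangle_ineq]) (auto simp: norm_mult intro!: mult_left_mono nw)
      also have "\<dots> \<le> ?R"
        using norm_entry_le_sum[OF that, of "\<lambda>a b. norm (A a b) + norm (B a b) * (norm w0 + 1)"]
        by simp
      finally show ?thesis .
    qed
    have "norm (mpow n (?A w) k i j / fact k) = norm (mpow n (?A w) k i j) / fact k"
      by (simp add: norm_divide norm_fact)
    also have "\<dots> \<le> (real n * ?R) ^ k / fact k"
      by (intro divide_right_mono norm_mpow_le[OF bnd assms]) auto
    finally show "norm (mpow n (?A w) k i j / fact k) \<le> (real n * ?R) ^ k / fact k" .
  qed
  then show "\<exists>d>0. cball w0 d \<subseteq> UNIV \<and> uniform_limit (cball w0 d)
      (\<lambda>N w. \<Sum>k<N. mpow n (?A w) k i j / fact k) (\<lambda>w. \<Sum>k. mpow n (?A w) k i j / fact k) sequentially"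
    by (intro exI[of _ 1]) auto
qed

lemma borel_measurable_PiM_component:
  "(\<lambda>p. p x) \<in> borel_measurable (PiM I (\<lambda>_. lborel :: real measure))"
proof (cases "x \<in> I")
  case True
  then show ?thesis using measurable_component_singleton[OF True, of "\<lambda>_. lborel"] by simp
next
  case False
  have "(\<lambda>p. p x) \<in> borel_measurable (PiM I (\<lambda>_. lborel :: real measure)) \<longleftrightarrow>
        (\<lambda>p. undefined :: real) \<in> borel_measurable (PiM I (\<lambda>_. lborel :: real measure))"
    by (rule measurable_cong) (use False in \<open>auto simp: space_PiM PiE_def extensional_def\<close>)
  then show ?thesis by simp
qed

lemma borel_measurable_mpow:
  assumes "\<And>i j. (\<lambda>p. E p i j) \<in> borel_measurable M"
  shows "(\<lambda>p. mpow n (E p) k i j :: real) \<in> borel_measurable M"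
proof (induction k arbitrary: i j)
  case (Suc k)
  then show ?case
    by (simp add: mmult_def) (intro borel_measurable_sum borel_measurable_times assms; simp)
qed (simp add: mident_def)

lemma borel_measurable_mexp:
  assumes "\<And>i j. (\<lambda>p. E p i j) \<in> borel_measurable M" "i < n"
  shows "(\<lambda>p. mexp n (E p) i j) \<in> borel_measurable M"
proof (rule borel_measurable_LIMSEQ_metric[where f="\<lambda>N p. \<Sum>k<N. mpow n (E p) k i j / fact k"])
  fix N
  show "(\<lambda>p. \<Sum>k<N. mpow n (E p) k i j / fact k) \<in> borel_measurable M"
    by (intro borel_measurable_sum borel_measurable_divide borel_measurable_mpow assms borel_measurable_const)
next
  fix p
  show "(\<lambda>N. \<Sum>k<N. mpow n (E p) k i j / fact k) \<longlonglongrightarrow> mexp n (E p) i j"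
    unfolding mexp_def by (rule summable_LIMSEQ[OF summable_mpow_divide_fact[OF assms(2)]])
qed

section \<open>Determinants\<close>

lemma det_mat_Leibniz:
  "Determinant.det (Matrix.mat N N (\<lambda>(i,j). F i j)) =
     (\<Sum>p\<in>{p. p permutes {0..<N}}. signof p * (\<Prod>i=0..<N. F i (p i)))"
proof -
  have "Determinant.det (Matrix.mat N N (\<lambda>(i,j). F i j)) =
      (\<Sum>p\<in>{p. p permutes {0..<N}}. signof p * (\<Prod>i=0..<N. Matrix.mat N N (\<lambda>(i,j). F i j) $$ (i, p i)))"
    by (rule det_def') simp
  also have "\<dots> = (\<Sum>p\<in>{p. p permutes {0..<N}}. signof p * (\<Prod>i=0..<N. F i (p i)))"
  proof (rule sum.cong[OF refl])
    fix p assume "p \<in> {p. p permutes {0..<N}}"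
    then have "p i < N" if "i < N" for i using permutes_in_image[of p "{0..<N}" i] that by auto
    then show "signof p * (\<Prod>i=0..<N. Matrix.mat N N (\<lambda>(i,j). F i j) $$ (i, p i)) =
               signof p * (\<Prod>i=0..<N. F i (p i))"
      by (intro arg_cong[where f="\<lambda>x. signof p * x"] prod.cong) auto
  qed
  finally show ?thesis .
qed

lemma det_mat_holomorphic:
  assumes "\<And>i j. (\<lambda>w. F w i j) holomorphic_on UNIV"
  shows "(\<lambda>w. Determinant.det (Matrix.mat N N (\<lambda>(i,j). F w i j))) holomorphic_on UNIV"
  unfolding det_mat_Leibniz
  by (intro holomorphic_on_sum holomorphic_on_mult holomorphic_on_prod holomorphic_on_const assms)

lemma borel_measurable_det_mat:
  assumes "\<And>i j. (\<lambda>p. F p i j) \<in> borel_measurable M"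
  shows "(\<lambda>p. Determinant.det (Matrix.mat N N (\<lambda>(i,j). F p i j)) :: real) \<in> borel_measurable M"
  unfolding det_mat_Leibniz
  by (intro borel_measurable_sum borel_measurable_times borel_measurable_prod borel_measurable_const assms)

lemma det_mat_ne_0_iff:
  "Determinant.det (Matrix.mat N N (\<lambda>(i,j). F i j)) \<noteq> (0::'a::idom) \<longleftrightarrow>
     (\<forall>g. (\<forall>i<N. (\<Sum>j<N. F i j * g j) = 0) \<longrightarrow> (\<forall>j<N. g j = 0))"
proof -
  let ?A = "Matrix.mat N N (\<lambda>(i,j). F i j)"
  have A: "?A \<in> carrier_mat N N" by simp
  have mv: "(?A *\<^sub>v v) $ i = (\<Sum>j<N. F i j * v $ j)" if "i < N" "v \<in> carrier_vec N" for i v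
    using that by (simp add: scalar_prod_def lessThan_atLeast0 row_def)
  show ?thesis
  proof
    assume d: "Determinant.det ?A \<noteq> 0"
    show "\<forall>g. (\<forall>i<N. (\<Sum>j<N. F i j * g j) = 0) \<longrightarrow> (\<forall>j<N. g j = 0)"
    proof (intro allI impI)
      fix g j assume z: "\<forall>i<N. (\<Sum>j<N. F i j * g j) = 0" and j: "j < N"
      have "?A *\<^sub>v vec N g = 0\<^sub>v N"
        by (rule eq_vecI) (use z mv in auto)
      then have "vec N g = 0\<^sub>v N" using d det_0_iff_vec_prod_zero[OF A] vec_carrier[of N g] by blast
      then show "g j = 0" using j by (metis index_vec index_zero_vec(1))
    qed
  next
    assume K: "\<forall>g. (\<forall>i<N. (\<Sum>j<N. F i j * g j) = 0) \<longrightarrow> (\<forall>j<N. g j = 0)"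
    show "Determinant.det ?A \<noteq> 0"
    proof
      assume "Determinant.det ?A = 0"
      then obtain v where v: "v \<in> carrier_vec N" "v \<noteq> 0\<^sub>v N" "?A *\<^sub>v v = 0\<^sub>v N"
        using det_0_iff_vec_prod_zero[OF A] by auto
      have "\<forall>i<N. (\<Sum>j<N. F i j * v $ j) = 0"
        using v mv by (metis index_zero_vec(1))
      then have "\<forall>j<N. v $ j = 0" using K by blast
      then have "v = 0\<^sub>v N" using v(1) by (intro eq_vecI) auto
      with v(2) show False by simp
    qed
  qed
qed

section \<open>Observation matrices\<close>

definition vmult :: "nat \<Rightarrow> (nat \<Rightarrow> 'a::comm_semiring_1) \<Rightarrow> (nat \<Rightarrow> nat \<Rightarrow> 'a) \<Rightarrow> nat \<Rightarrow> 'a" where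
  "vmult n v A = (\<lambda>j. \<Sum>i<n. v i * A i j)"

definition qform :: "nat \<Rightarrow> (nat \<Rightarrow> 'a::comm_semiring_1) \<Rightarrow> (nat \<Rightarrow> nat \<Rightarrow> 'a) \<Rightarrow> 'a" where
  "qform n v G = (\<Sum>i<n. \<Sum>j<n. v i * v j * G i j)"

definition upper_pairs :: "nat \<Rightarrow> (nat \<times> nat) set" where
  "upper_pairs n = {(i, j). i \<le> j \<and> j < n}"

text \<open>For \<open>i < j\<close> this is \<open>E\<^sub>i\<^sub>j + E\<^sub>j\<^sub>i\<close>, for \<open>i = j\<close> it is \<open>E\<^sub>i\<^sub>i\<close>: the standard basis of the
  symmetric matrices, indexed by \<open>upper_pairs n\<close>.\<close>

definition sym_unit :: "nat \<times> nat \<Rightarrow> nat \<Rightarrow> nat \<Rightarrow> 'a::zero_neq_one" where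
  "sym_unit q i j = (if (i, j) = q \<or> (j, i) = q then 1 else 0)"

text \<open>Row \<open>k\<close> holds the coefficients of the \<open>k\<close>-th observation
  \<open>d \<mapsto> b\<^sup>T X\<^sub>k d\<close>, resp. \<open>G \<mapsto> b\<^sup>T X\<^sub>k G X\<^sub>k\<^sup>T b\<close>, the latter in the basis
  \<open>sym_unit (e r)\<close> for an enumeration \<open>e\<close> of \<open>upper_pairs n\<close>.\<close>

definition lin_obs_mat :: "nat \<Rightarrow> (nat \<Rightarrow> 'a::comm_semiring_1) \<Rightarrow> (nat \<Rightarrow> nat \<Rightarrow> nat \<Rightarrow> 'a) \<Rightarrow> 'a mat" where
  "lin_obs_mat n v X = Matrix.mat n n (\<lambda>(k, j). vmult n v (X k) j)"

definition quad_obs_mat ::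
    "nat \<Rightarrow> nat \<Rightarrow> (nat \<Rightarrow> 'a::comm_semiring_1) \<Rightarrow> (nat \<Rightarrow> nat \<times> nat) \<Rightarrow> (nat \<Rightarrow> nat \<Rightarrow> nat \<Rightarrow> 'a) \<Rightarrow> 'a mat" where
  "quad_obs_mat N n v e X = Matrix.mat N N (\<lambda>(k, r). qform n (vmult n v (X k)) (sym_unit (e r)))"

lemma bilin_eq_vmult: "bilin n b X d = (\<Sum>j<n. vmult n b X j * d j)"
  unfolding bilin_def vmult_def sum_distrib_right by (rule sum.swap)

lemma sum_swap_pairs:
  "(\<Sum>i\<in>A. \<Sum>j\<in>B. \<Sum>k\<in>C. \<Sum>l\<in>D. f i j k l) = (\<Sum>k\<in>C. \<Sum>l\<in>D. \<Sum>i\<in>A. \<Sum>j\<in>B. f i j k l)"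
proof -
  have "(\<Sum>i\<in>A. \<Sum>j\<in>B. \<Sum>k\<in>C. \<Sum>l\<in>D. f i j k l) = (\<Sum>i\<in>A. \<Sum>k\<in>C. \<Sum>j\<in>B. \<Sum>l\<in>D. f i j k l)"
    by (intro sum.cong refl sum.swap)
  also have "\<dots> = (\<Sum>i\<in>A. \<Sum>k\<in>C. \<Sum>l\<in>D. \<Sum>j\<in>B. f i j k l)"
    by (intro sum.cong refl sum.swap)
  also have "\<dots> = (\<Sum>k\<in>C. \<Sum>i\<in>A. \<Sum>l\<in>D. \<Sum>j\<in>B. f i j k l)"
    by (rule sum.swap)
  also have "\<dots> = (\<Sum>k\<in>C. \<Sum>l\<in>D. \<Sum>i\<in>A. \<Sum>j\<in>B. f i j k l)"
    by (intro sum.cong refl sum.swap)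
  finally show ?thesis .
qed

lemma bilin_congruence_eq_qform:
  "bilin n b (mmult n (mmult n X G) (mtrans X)) b = qform n (vmult n b X) G"
proof -
  have "b i * mmult n (mmult n X G) (mtrans X) i j * b j =
      (\<Sum>a<n. \<Sum>c<n. b i * X i a * G a c * X j c * b j)" for i j
  proof -
    have "b i * mmult n (mmult n X G) (mtrans X) i j * b j =
        (\<Sum>c<n. \<Sum>a<n. b i * X i a * G a c * X j c * b j)"
      by (simp add: mmult_def mtrans_def sum_distrib_left sum_distrib_right mult_ac)
    then show ?thesis by (rule trans) (rule sum.swap)
  qed
  then have "bilin n b (mmult n (mmult n X G) (mtrans X)) b =
      (\<Sum>i<n. \<Sum>j<n. \<Sum>a<n. \<Sum>c<n. b i * X i a * G a c * X j c * b j)"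
    by (simp add: bilin_def)
  also have "\<dots> = (\<Sum>a<n. \<Sum>c<n. \<Sum>i<n. \<Sum>j<n. b i * X i a * G a c * X j c * b j)"
    by (rule sum_swap_pairs)
  also have "\<dots> = qform n (vmult n b X) G"
    unfolding qform_def vmult_def sum_product unfolding sum_distrib_right
    by (intro sum.cong refl) (simp add: mult_ac)
  finally show ?thesis .
qed

lemma qform_cong:
  "(\<And>i j. i < n \<Longrightarrow> j < n \<Longrightarrow> G i j = H i j) \<Longrightarrow> qform n v G = qform n v H"
  unfolding qform_def by (intro sum.cong refl) auto

lemma qform_diff:
  "qform n v (\<lambda>i j. G i j - H i j) = qform n v G - (qform n v H :: 'a::comm_ring_1)"
  unfolding qform_def by (simp add: right_diff_distrib sum_subtractf)

lemma qform_sum: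
  "qform n v (\<lambda>i j. \<Sum>r\<in>R. g r * G r i j) = (\<Sum>r\<in>R. qform n v (G r) * g r)"
proof -
  have "qform n v (\<lambda>i j. \<Sum>r\<in>R. g r * G r i j) = (\<Sum>i<n. \<Sum>j<n. \<Sum>r\<in>R. v i * v j * G r i j * g r)"
    unfolding qform_def sum_distrib_left by (simp add: mult_ac)
  also have "\<dots> = (\<Sum>i<n. \<Sum>r\<in>R. \<Sum>j<n. v i * v j * G r i j * g r)"
    by (intro sum.cong refl sum.swap)
  also have "\<dots> = (\<Sum>r\<in>R. qform n v (G r) * g r)"
    unfolding qform_def sum_distrib_right by (rule sum.swap)
  finally show ?thesis .
qed
lemma finite_upper_pairs: "finite (upper_pairs n)"
  by (rule finite_subset[of _ "{..<n} \<times> {..<n}"]) (auto simp: upper_pairs_def)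

lemma card_upper_pairs: "2 * card (upper_pairs n) = n * (n + 1)"
proof (induction n)
  case (Suc n)
  have "upper_pairs (Suc n) = upper_pairs n \<union> (\<lambda>i. (i, n)) ` {..n}"
    by (auto simp: upper_pairs_def)
  moreover have "upper_pairs n \<inter> (\<lambda>i. (i, n)) ` {..n} = {}"
    by (auto simp: upper_pairs_def)
  moreover have "card ((\<lambda>i. (i, n)) ` {..n}) = Suc n"
    by (subst card_image) (auto simp: inj_on_def)
  ultimately have "card (upper_pairs (Suc n)) = card (upper_pairs n) + Suc n"
    using finite_upper_pairs by (simp add: card_Un_disjoint)
  then show ?case using Suc by simp
qed (simp add: upper_pairs_def)

lemma sum_sym_unit_reconstruct:
  fixes D :: "nat \<Rightarrow> nat \<Rightarrow> 'a::comm_semiring_1"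
  assumes e: "bij_betw e {..<N} (upper_pairs n)" and sym: "\<And>i j. D i j = D j i" and ij: "i < n" "j < n"
  shows "(\<Sum>r<N. D (fst (e r)) (snd (e r)) * sym_unit (e r) i j) = D i j"
proof -
  let ?q = "(min i j, max i j)"
  have unit: "sym_unit q i j = (if q = ?q then 1 else 0)" if q_mem: "q \<in> upper_pairs n" for q
  proof -
    obtain a c where q: "q = (a, c)" "a \<le> c"
      using q_mem by (cases q) (auto simp: upper_pairs_def)
    then have "((i, j) = q \<or> (j, i) = q) \<longleftrightarrow> q = ?q"
      by (cases "i \<le> j") (auto simp: min_def max_def)
    then show ?thesis by (simp add: sym_unit_def)
  qed
  have "(\<Sum>r<N. D (fst (e r)) (snd (e r)) * sym_unit (e r) i j) =
      (\<Sum>q\<in>upper_pairs n. D (fst q) (snd q) * sym_unit q i j)"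
    by (rule sum.reindex_bij_betw[OF e])
  also have "\<dots> = (\<Sum>q\<in>upper_pairs n. if q = ?q then D (fst q) (snd q) else 0)"
    by (intro sum.cong refl) (simp add: unit)
  also have "\<dots> = D (min i j) (max i j)"
    using ij by (subst sum.delta[OF finite_upper_pairs]) (auto simp: upper_pairs_def)
  also have "\<dots> = D i j"
    using sym[of j i] by (cases "i \<le> j") (auto simp: min_def max_def)
  finally show ?thesis .
qed

lemma sum_sym_unit_at_enum:
  fixes g :: "nat \<Rightarrow> 'a::comm_semiring_1"
  assumes e: "bij_betw e {..<N} (upper_pairs n)" and r: "r < N" "e r = (i, j)"
  shows "(\<Sum>r'<N. g r' * sym_unit (e r') i j) = g r"
proof -
  have "i \<le> j" using bij_betwE[OF e] r by (force simp: upper_pairs_def)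
  have unit: "sym_unit (e r') i j = (if r' = r then 1 else 0)" if r': "r' < N" for r'
  proof -
    obtain a c where ac: "e r' = (a, c)" "a \<le> c"
      using bij_betwE[OF e] r' by (cases "e r'") (force simp: upper_pairs_def)
    then have "sym_unit (e r') i j = (if e r' = e r then 1 else 0)"
      using r(2) \<open>i \<le> j\<close> by (auto simp: sym_unit_def)
    also have "\<dots> = (if r' = r then 1 else 0)"
      using bij_betw_imp_inj_on[OF e] r' r(1) by (auto simp: inj_on_def)
    finally show ?thesis .
  qed
  have "(\<Sum>r'<N. g r' * sym_unit (e r') i j) = (\<Sum>r'<N. if r' = r then g r' else 0)"
    by (intro sum.cong refl) (simp add: unit)
  also have "\<dots> = g r" using r(1) by simp
  finally show ?thesis .
qed

lemma sym_unit_commute: "sym_unit q i j = sym_unit q j i"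
  by (auto simp: sym_unit_def)

lemma det_quad_obs_mat_ne_0_iff:
  fixes v :: "nat \<Rightarrow> 'a::idom"
  assumes e: "bij_betw e {..<N} (upper_pairs n)"
  shows "Determinant.det (quad_obs_mat N n v e X) \<noteq> 0 \<longleftrightarrow>
    (\<forall>D. (\<forall>i j. D i j = D j i) \<longrightarrow> (\<forall>k<N. qform n (vmult n v (X k)) D = 0) \<longrightarrow>
         (\<forall>i<n. \<forall>j<n. D i j = 0))"
  unfolding quad_obs_mat_def det_mat_ne_0_iff
proof (intro iffI allI impI)
  fix D i j
  assume K: "\<forall>g. (\<forall>k<N. (\<Sum>r<N. qform n (vmult n v (X k)) (sym_unit (e r)) * g r) = 0) \<longrightarrow> (\<forall>r<N. g r = 0)"
    and sym: "\<forall>i j. D i j = D j i" and Q: "\<forall>k<N. qform n (vmult n v (X k)) D = 0"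
    and ij: "i < n" "j < n"
  define g where "g r = D (fst (e r)) (snd (e r))" for r
  have D_eq: "(\<Sum>r<N. g r * sym_unit (e r) a c) = D a c" if "a < n" "c < n" for a c
    unfolding g_def by (rule sum_sym_unit_reconstruct[OF e]) (use sym that in auto)
  have "qform n (vmult n v (X k)) D = (\<Sum>r<N. qform n (vmult n v (X k)) (sym_unit (e r)) * g r)" for k
  proof -
    have "qform n (vmult n v (X k)) D = qform n (vmult n v (X k)) (\<lambda>a c. \<Sum>r<N. g r * sym_unit (e r) a c)"
      by (rule qform_cong) (simp add: D_eq)
    then show ?thesis by (simp add: qform_sum)
  qed
  then have g0: "\<forall>r<N. g r = 0" using K Q by simp
  have "(min i j, max i j) \<in> e ` {..<N}"
    using bij_betw_imp_surj_on[OF e] ij by (auto simp: upper_pairs_def)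
  then obtain r where "r < N" "e r = (min i j, max i j)" by auto
  with g0 have "D (min i j) (max i j) = 0" by (force simp: g_def)
  with sym show "D i j = 0" by (cases "i \<le> j") (auto simp: min_def max_def)
next
  fix g r
  assume K: "\<forall>D. (\<forall>i j. D i j = D j i) \<longrightarrow> (\<forall>k<N. qform n (vmult n v (X k)) D = 0) \<longrightarrow> (\<forall>i<n. \<forall>j<n. D i j = 0)"
    and Q: "\<forall>k<N. (\<Sum>r<N. qform n (vmult n v (X k)) (sym_unit (e r)) * g r) = 0" and r: "r < N"
  define D where "D i j = (\<Sum>r<N. g r * sym_unit (e r) i j)" for i j
  have "\<forall>i j. D i j = D j i" by (simp add: D_def sym_unit_commute)
  moreover have "\<forall>k<N. qform n (vmult n v (X k)) D = 0"
    using Q unfolding D_def qform_sum by simp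
  ultimately have D0: "\<forall>i<n. \<forall>j<n. D i j = 0" using K by blast
  obtain i j where ij: "e r = (i, j)" by (cases "e r") auto
  then have "(i, j) \<in> upper_pairs n" using bij_betwE[OF e] r by force
  then have "D i j = 0" using D0 by (auto simp: upper_pairs_def)
  then show "g r = 0" using sum_sym_unit_at_enum[OF e r ij, of g] by (simp add: D_def)
qed

lemma inj_on_sym_mats_if_det_quad_obs_mat:
  assumes e: "bij_betw e {..<N} (upper_pairs n)"
    and det: "Determinant.det (quad_obs_mat N n b e X) \<noteq> 0"
  shows "inj_on (\<lambda>G. map (\<lambda>k. bilin n b (mmult n (mmult n (X k) G) (mtrans (X k))) b) [0..<N]) (sym_mats n)"
proof (rule inj_onI)
  fix G H assume G: "G \<in> sym_mats n" and H: "H \<in> sym_mats n"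
    and eq: "map (\<lambda>k. bilin n b (mmult n (mmult n (X k) G) (mtrans (X k))) b) [0..<N] =
             map (\<lambda>k. bilin n b (mmult n (mmult n (X k) H) (mtrans (X k))) b) [0..<N]"
  have "qform n (vmult n b (X k)) (\<lambda>i j. G i j - H i j) = 0" if "k < N" for k
  proof -
    have "bilin n b (mmult n (mmult n (X k) G) (mtrans (X k))) b =
          bilin n b (mmult n (mmult n (X k) H) (mtrans (X k))) b"
      using eq that by (simp add: map_eq_conv)
    then show ?thesis by (simp add: qform_diff bilin_congruence_eq_qform)
  qed
  moreover have "\<forall>i j. G i j - H i j = G j i - H j i"
    using G H by (simp add: sym_mats_def)
  ultimately have "\<forall>i<n. \<forall>j<n. G i j - H i j = 0"
    using spec[OF iffD1[OF det_quad_obs_mat_ne_0_iff[OF e] det], of "\<lambda>i j. G i j - H i j"] by blast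
  moreover have "G i j = 0 \<and> H i j = 0" if "\<not> (i < n \<and> j < n)" for i j
    using G H that by (auto simp: sym_mats_def)
  ultimately show "G = H"
    by (intro ext) (metis eq_iff_diff_eq_0)
qed

lemma inj_on_vecs_if_det_lin_obs_mat:
  assumes det: "Determinant.det (lin_obs_mat n b X) \<noteq> 0"
  shows "inj_on (\<lambda>d. map (\<lambda>k. bilin n b (X k) d) [0..<n]) (vecs n)"
proof (rule inj_onI)
  fix d d' assume d: "d \<in> vecs n" and d': "d' \<in> vecs n"
    and eq: "map (\<lambda>k. bilin n b (X k) d) [0..<n] = map (\<lambda>k. bilin n b (X k) d') [0..<n]"
  have "(\<Sum>j<n. vmult n b (X k) j * (d j - d' j)) = 0" if "k < n" for k
  proof -
    have "bilin n b (X k) d = bilin n b (X k) d'"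
      using eq that by (simp add: map_eq_conv)
    then show ?thesis by (simp add: bilin_eq_vmult right_diff_distrib sum_subtractf)
  qed
  then have "\<forall>j<n. d j - d' j = 0"
    using spec[OF det[unfolded lin_obs_mat_def det_mat_ne_0_iff], of "\<lambda>j. d j - d' j"] by blast
  moreover have "d j = 0 \<and> d' j = 0" if "\<not> j < n" for j
    using d d' that by (auto simp: vecs_def)
  ultimately show "d = d'"
    by (intro ext) (metis eq_iff_diff_eq_0)
qed

definition obs_det ::
    "nat \<Rightarrow> nat \<Rightarrow> (nat \<Rightarrow> 'a::comm_ring_1) \<Rightarrow> (nat \<Rightarrow> nat \<times> nat) \<Rightarrow> (nat \<Rightarrow> nat \<Rightarrow> nat \<Rightarrow> 'a) \<Rightarrow> 'a" where
  "obs_det N n v e X = Determinant.det (quad_obs_mat N n v e X) * Determinant.det (lin_obs_mat n v X)"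

lemma obs_det_cong:
  assumes "\<And>k i j. i < n \<Longrightarrow> j < n \<Longrightarrow> X k i j = Y k i j"
  shows "obs_det N n v e X = obs_det N n v e Y"
proof -
  have v: "vmult n v (X k) j = vmult n v (Y k) j" if "j < n" for k j
    using that assms by (auto simp: vmult_def intro!: sum.cong)
  have "quad_obs_mat N n v e X = quad_obs_mat N n v e Y"
    by (rule eq_matI) (auto simp: quad_obs_mat_def qform_def v intro!: sum.cong)
  moreover have "lin_obs_mat n v X = lin_obs_mat n v Y"
    by (rule eq_matI) (auto simp: lin_obs_mat_def v)
  ultimately show ?thesis by (simp add: obs_det_def)
qed

lemma of_real_sym_unit: "of_real (sym_unit q i j) = sym_unit q i j"
  by (simp add: sym_unit_def)

lemma obs_det_of_real:
  "obs_det N n (\<lambda>i. of_real (v i)) e (\<lambda>k i j. of_real (X k i j)) = (of_real (obs_det N n v e X) :: complex)"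
proof -
  have "quad_obs_mat N n (\<lambda>i. of_real (v i)) e (\<lambda>k i j. of_real (X k i j)) = map_mat complex_of_real (quad_obs_mat N n v e X)"
    by (rule eq_matI) (simp_all add: quad_obs_mat_def qform_def vmult_def of_real_sym_unit)
  moreover have "lin_obs_mat n (\<lambda>i. of_real (v i)) (\<lambda>k i j. of_real (X k i j)) = map_mat complex_of_real (lin_obs_mat n v X)"
    by (rule eq_matI) (simp_all add: lin_obs_mat_def vmult_def)
  ultimately show ?thesis by (simp add: obs_det_def of_real_hom.hom_det)
qed

lemma obs_det_holomorphic:
  fixes v :: "nat \<Rightarrow> complex"
  assumes "\<And>k i j. i < n \<Longrightarrow> (\<lambda>w. X w k i j) holomorphic_on UNIV"
  shows "(\<lambda>w. obs_det N n v e (X w)) holomorphic_on UNIV"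
proof -
  have v: "(\<lambda>w. vmult n v (X w k) j) holomorphic_on UNIV" for k j
    unfolding vmult_def by (intro holomorphic_on_sum holomorphic_on_mult holomorphic_on_const assms) simp
  show ?thesis
    unfolding obs_det_def quad_obs_mat_def lin_obs_mat_def qform_def
    by (intro holomorphic_on_mult det_mat_holomorphic holomorphic_on_sum holomorphic_on_const v)
qed

lemma borel_measurable_obs_det:
  fixes v :: "nat \<Rightarrow> real"
  assumes "\<And>k i j. i < n \<Longrightarrow> (\<lambda>p. X p k i j) \<in> borel_measurable M"
  shows "(\<lambda>p. obs_det N n v e (X p)) \<in> borel_measurable M"
proof -
  have v: "(\<lambda>p. vmult n v (X p k) j) \<in> borel_measurable M" for k j
    unfolding vmult_def by (intro borel_measurable_sum borel_measurable_times borel_measurable_const assms) simp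
  show ?thesis
    unfolding obs_det_def quad_obs_mat_def lin_obs_mat_def qform_def
    by (intro borel_measurable_times borel_measurable_det_mat borel_measurable_sum borel_measurable_const v)
qed

section \<open>A nondegenerate generator\<close>

lemma sum_mident_left:
  assumes "i < n" shows "(\<Sum>l<n. mident i l * f l) = (f i :: 'a::comm_semiring_1)"
proof -
  have "(\<Sum>l<n. mident i l * f l) = (\<Sum>l<n. if l = i then f l else 0)"
    by (intro sum.cong) (auto simp: mident_def)
  then show ?thesis using assms by simp
qed

lemma sum_mident_right:
  assumes "j < n" shows "(\<Sum>l<n. f l * mident l j) = (f j :: 'a::comm_semiring_1)"
proof -
  have "(\<Sum>l<n. f l * mident l j) = (\<Sum>l<n. if l = j then f l else 0)"
    by (intro sum.cong) (auto simp: mident_def)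
  then show ?thesis using assms by simp
qed

definition householder :: "nat \<Rightarrow> (nat \<Rightarrow> real) \<Rightarrow> nat \<Rightarrow> nat \<Rightarrow> real" where
  "householder n v = (\<lambda>i j. mident i j - 2 / (\<Sum>l<n. (v l)\<^sup>2) * v i * v j)"

text \<open>For \<open>v = 0\<close> the factor \<open>2 / 0\<close> is \<open>0\<close> and the reflection degenerates to the identity,
  which is still an involution.\<close>

lemma mmult_householder_self:
  assumes "i < n" "j < n"
  shows "mmult n (householder n v) (householder n v) i j = mident i j"
proof -
  define s where "s = (\<Sum>l<n. (v l)\<^sup>2)"
  define k where "k = 2 / s"
  have kk: "k * k * s = 2 * k" by (cases "s = 0") (simp_all add: k_def field_simps power2_eq_square)
  have pt: "householder n v i l * householder n v l j = mident i l * mident l j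
      - k * v j * (mident i l * v l) - k * v i * (v l * mident l j) + k * k * v i * v j * (v l)\<^sup>2" for l
    unfolding householder_def s_def k_def by (simp add: algebra_simps power2_eq_square)
  have "mmult n (householder n v) (householder n v) i j =
      (\<Sum>l<n. mident i l * mident l j) - k * v j * (\<Sum>l<n. mident i l * v l)
      - k * v i * (\<Sum>l<n. v l * mident l j) + k * k * v i * v j * s"
    unfolding mmult_def pt s_def by (simp add: sum.distrib sum_subtractf sum_distrib_left)
  also have "\<dots> = mident i j - 2 * k * v i * v j + k * k * s * v i * v j"
    using assms by (simp only: sum_mident_left sum_mident_right) (simp add: algebra_simps)
  also have "\<dots> = mident i j" by (simp add: kk)
  finally show ?thesis .
qed

lemma vmult_householder:
  assumes norm: "(\<Sum>i<n. (b i)\<^sup>2) = (\<Sum>i<n. (w i)\<^sup>2)" and j: "j < n"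
  shows "vmult n b (householder n (\<lambda>i. b i - w i)) j = w j"
proof -
  define v where "v i = b i - w i" for i
  define s where "s = (\<Sum>l<n. (v l)\<^sup>2)"
  define bv where "bv = (\<Sum>l<n. b l * v l)"
  have s_bv: "s = 2 * bv"
  proof -
    have "s = (\<Sum>l<n. (b l)\<^sup>2) - 2 * (\<Sum>l<n. b l * w l) + (\<Sum>l<n. (w l)\<^sup>2)"
      by (simp add: s_def v_def power2_diff sum.distrib sum_subtractf sum_distrib_left mult_ac)
    also have "\<dots> = 2 * bv"
      using norm by (simp add: bv_def v_def right_diff_distrib sum_subtractf power2_eq_square)
    finally show ?thesis .
  qed
  have "vmult n b (householder n v) j = (\<Sum>i<n. b i * mident i j - 2 / s * v j * (b i * v i))"
    unfolding vmult_def householder_def s_def by (intro sum.cong refl) (simp add: algebra_simps)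
  also have "\<dots> = b j - 2 / s * v j * bv"
    using j by (simp add: sum_subtractf sum_mident_right bv_def sum_distrib_left)
  also have "\<dots> = w j"
  proof (cases "s = 0")
    case True
    then have "\<forall>l\<in>{..<n}. (v l)\<^sup>2 = 0"
      unfolding s_def by (subst sum_nonneg_eq_0_iff[symmetric]) auto
    with j show ?thesis by (simp add: v_def)
  next
    case False
    then show ?thesis by (simp add: s_bv v_def)
  qed
  moreover have "v = (\<lambda>i. b i - w i)" by (simp add: v_def fun_eq_iff)
  ultimately show ?thesis by simp
qed

definition conj_diag :: "nat \<Rightarrow> (nat \<Rightarrow> nat \<Rightarrow> 'a::comm_semiring_1) \<Rightarrow> (nat \<Rightarrow> 'a) \<Rightarrow> nat \<Rightarrow> nat \<Rightarrow> 'a" where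
  "conj_diag n H d = (\<lambda>i j. \<Sum>a<n. H i a * d a * H a j)"

lemma mpow_conj_diag:
  assumes H: "\<And>i j. i < n \<Longrightarrow> j < n \<Longrightarrow> mmult n H H i j = mident i j" and i: "i < n" and j: "j < n"
  shows "mpow n (conj_diag n H d) k i j = conj_diag n H (\<lambda>a. d a ^ k) i j"
  using i
proof (induction k arbitrary: i)
  case 0
  then show ?case using H[OF 0 j] by (simp add: conj_diag_def mmult_def)
next
  case (Suc k)
  have "mpow n (conj_diag n H d) (Suc k) i j =
      (\<Sum>l<n. (\<Sum>a<n. H i a * d a * H a l) * (\<Sum>c<n. H l c * d c ^ k * H c j))"
    unfolding mpow.simps mmult_def by (intro sum.cong refl) (simp add: Suc.IH, simp add: conj_diag_def)
  also have "\<dots> = (\<Sum>a<n. \<Sum>c<n. H i a * d a * mmult n H H a c * (d c ^ k * H c j))"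
  proof -
    have "(\<Sum>l<n. (\<Sum>a<n. H i a * d a * H a l) * (\<Sum>c<n. H l c * d c ^ k * H c j)) =
        (\<Sum>l<n. \<Sum>a<n. \<Sum>c<n. H i a * d a * (H a l * H l c) * (d c ^ k * H c j))"
      by (simp add: sum_product mult_ac)
    also have "\<dots> = (\<Sum>a<n. \<Sum>l<n. \<Sum>c<n. H i a * d a * (H a l * H l c) * (d c ^ k * H c j))"
      by (rule sum.swap)
    also have "\<dots> = (\<Sum>a<n. \<Sum>c<n. \<Sum>l<n. H i a * d a * (H a l * H l c) * (d c ^ k * H c j))"
      by (intro sum.cong refl sum.swap)
    finally show ?thesis
      by (simp add: mmult_def sum_distrib_left sum_distrib_right)
  qed
  also have "\<dots> = (\<Sum>a<n. H i a * d a * (\<Sum>c<n. mident a c * (d c ^ k * H c j)))"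
    by (intro sum.cong refl) (simp add: H sum_distrib_left mult_ac)
  also have "\<dots> = conj_diag n H (\<lambda>a. d a ^ Suc k) i j"
    by (simp add: sum_mident_left conj_diag_def mult_ac)
  finally show ?case .
qed

lemma mexp_conj_diag:
  assumes H: "\<And>i j. i < n \<Longrightarrow> j < n \<Longrightarrow> mmult n H H i j = mident i j" and ij: "i < n" "j < n"
  shows "mexp n (conj_diag n H d) i j = conj_diag n H (\<lambda>a. exp (d a)) i j"
proof -
  have "(\<lambda>k. mpow n (conj_diag n H d) k i j / fact k) = (\<lambda>k. \<Sum>a<n. H i a * (d a ^ k /\<^sub>R fact k) * H a j)"
    using mpow_conj_diag[OF H ij] by (simp add: conj_diag_def sum_divide_distrib field_simps)
  moreover have "(\<lambda>k. \<Sum>a<n. H i a * (d a ^ k /\<^sub>R fact k) * H a j) sums conj_diag n H (\<lambda>a. exp (d a)) i j"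
    unfolding conj_diag_def by (intro sums_sum sums_mult sums_mult2 exp_converges)
  ultimately show ?thesis
    unfolding mexp_def by (simp add: sums_iff)
qed

lemma qform_vmult:
  "qform n (vmult n u M) D = qform n u (\<lambda>p q. \<Sum>a<n. \<Sum>c<n. M p a * M q c * D a c)"
proof -
  have "qform n (vmult n u M) D = (\<Sum>a<n. \<Sum>c<n. \<Sum>p<n. \<Sum>q<n. u p * u q * (M p a * M q c * D a c))"
    unfolding qform_def vmult_def sum_product unfolding sum_distrib_right
    by (intro sum.cong refl) (simp add: mult_ac)
  also have "\<dots> = (\<Sum>p<n. \<Sum>q<n. \<Sum>a<n. \<Sum>c<n. u p * u q * (M p a * M q c * D a c))"
    by (rule sum_swap_pairs)
  also have "\<dots> = qform n u (\<lambda>p q. \<Sum>a<n. \<Sum>c<n. M p a * M q c * D a c)"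
    by (simp add: qform_def sum_distrib_left)
  finally show ?thesis .
qed

lemma involution_congruence:
  assumes H: "\<And>i j. i < n \<Longrightarrow> j < n \<Longrightarrow> mmult n H H i j = mident i j" and ac: "a < n" "c < n"
  shows "(\<Sum>p<n. \<Sum>q<n. H a p * H c q * (\<Sum>a'<n. \<Sum>c'<n. H p a' * H q c' * D a' c')) = (D a c :: 'a::comm_semiring_1)"
proof -
  have "(\<Sum>p<n. \<Sum>q<n. H a p * H c q * (\<Sum>a'<n. \<Sum>c'<n. H p a' * H q c' * D a' c')) =
        (\<Sum>p<n. \<Sum>q<n. \<Sum>a'<n. \<Sum>c'<n. (H a p * H p a') * (H c q * H q c') * D a' c')"
    by (intro sum.cong refl) (simp add: sum_distrib_left mult_ac)
  also have "\<dots> = (\<Sum>a'<n. \<Sum>c'<n. \<Sum>p<n. \<Sum>q<n. (H a p * H p a') * (H c q * H q c') * D a' c')"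
    by (rule sum_swap_pairs)
  also have "\<dots> = (\<Sum>a'<n. \<Sum>c'<n. (\<Sum>p<n. H a p * H p a') * (\<Sum>q<n. H c q * H q c') * D a' c')"
    unfolding sum_product by (simp only: sum_distrib_right)
  also have "\<dots> = (\<Sum>a'<n. \<Sum>c'<n. mident a a' * (mident c c' * D a' c'))"
    using ac by (intro sum.cong refl) (simp add: H[unfolded mmult_def] mult.assoc)
  also have "\<dots> = D a c"
    using ac by (simp add: sum_distrib_left[symmetric] sum_mident_left)
  finally show ?thesis .
qed

lemma sum_square_eq_sum_upper_pairs:
  fixes F :: "nat \<Rightarrow> nat \<Rightarrow> 'a::comm_semiring_1"
  assumes sym: "\<And>p q. F p q = F q p"
  shows "(\<Sum>p<n. \<Sum>q<n. F p q) = (\<Sum>x\<in>upper_pairs n. (if fst x = snd x then 1 else 2) * F (fst x) (snd x))"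
proof (induction n)
  case 0
  then show ?case by (simp add: upper_pairs_def)
next
  case (Suc n)
  define c where "c x = (if fst x = snd x then 1 else 2) * F (fst x) (snd x)" for x
  have split: "upper_pairs (Suc n) = upper_pairs n \<union> (\<lambda>i. (i, n)) ` insert n {..<n}"
    and disj: "upper_pairs n \<inter> (\<lambda>i. (i, n)) ` insert n {..<n} = {}"
    by (auto simp: upper_pairs_def)
  have "(\<Sum>x\<in>upper_pairs (Suc n). c x) = (\<Sum>x\<in>upper_pairs n. c x) + (\<Sum>x\<in>(\<lambda>i. (i, n)) ` insert n {..<n}. c x)"
    unfolding split by (rule sum.union_disjoint[OF finite_upper_pairs _ disj]) simp
  also have "(\<Sum>x\<in>(\<lambda>i. (i, n)) ` insert n {..<n}. c x) = (\<Sum>i\<in>insert n {..<n}. c (i, n))"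
    by (subst sum.reindex) (auto simp: inj_on_def)
  also have "\<dots> = 2 * (\<Sum>i<n. F i n) + F n n"
    by (simp add: c_def sum_distrib_left add.commute)
  finally have rhs: "(\<Sum>x\<in>upper_pairs (Suc n). c x) = (\<Sum>x\<in>upper_pairs n. c x) + (2 * (\<Sum>i<n. F i n) + F n n)" .
  have "(\<Sum>q<n. F n q) = (\<Sum>p<n. F p n)" by (intro sum.cong refl) (rule sym)
  then have "(\<Sum>p<Suc n. \<Sum>q<Suc n. F p q) = (\<Sum>p<n. \<Sum>q<n. F p q) + 2 * (\<Sum>i<n. F i n) + F n n"
    by (simp add: sum.distrib mult_2 add_ac)
  with rhs Suc.IH show ?case by (simp add: c_def add_ac)
qed

text \<open>The quadratic form is an exponential sum in \<open>s\<close> whose exponents \<open>\<mu> p + \<mu> q\<close> are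
  indexed by the unordered pairs \<open>{p, q}\<close>.\<close>

lemma exp_qform_vanishing_imp_zero:
  fixes P :: "nat \<Rightarrow> nat \<Rightarrow> real"
  assumes sym: "\<And>p q. P p q = P q p"
    and \<mu>: "inj_on (\<lambda>x. \<mu> (fst x) + \<mu> (snd x)) (upper_pairs n)"
    and S: "finite S" "card (upper_pairs n) \<le> card S"
    and zero: "\<And>s. s \<in> S \<Longrightarrow> qform n (\<lambda>p. w p * exp (s * \<mu> p)) P = 0"
    and pq: "p < n" "q < n"
  shows "w p * w q * P p q = 0"
proof -
  define c where "c x = (if fst x = snd x then 1 else 2) * (w (fst x) * w (snd x) * P (fst x) (snd x))" for x
  have "(\<Sum>x\<in>upper_pairs n. c x * exp ((\<mu> (fst x) + \<mu> (snd x)) * s)) = 0" if "s \<in> S" for s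
  proof -
    define F where "F p q = w p * w q * P p q * exp ((\<mu> p + \<mu> q) * s)" for p q
    have F_sym: "F p q = F q p" for p q
      by (simp add: F_def sym[of p q] mult.commute mult.left_commute add.commute)
    have "qform n (\<lambda>p. w p * exp (s * \<mu> p)) P = (\<Sum>p<n. \<Sum>q<n. F p q)"
      unfolding qform_def F_def by (intro sum.cong refl) (simp add: distrib_left exp_add mult_ac)
    also have "\<dots> = (\<Sum>x\<in>upper_pairs n. c x * exp ((\<mu> (fst x) + \<mu> (snd x)) * s))"
      unfolding sum_square_eq_sum_upper_pairs[of F, OF F_sym] by (simp add: F_def c_def mult_ac)
    finally show ?thesis using zero[OF that] by simp
  qed
  then have c0: "\<forall>x\<in>upper_pairs n. c x = 0"
    using exp_sum_eq_0_imp_coeffs_eq_0[OF finite_upper_pairs \<mu> S] by blast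
  have "(min p q, max p q) \<in> upper_pairs n" using pq by (auto simp: upper_pairs_def)
  then have "w (min p q) * w (max p q) * P (min p q) (max p q) = 0"
    using c0 by (auto simp: c_def split: if_splits)
  then show ?thesis using sym[of p q] by (cases "p \<le> q") (auto simp: min_def max_def mult_ac)
qed

lemma involution_apply_twice:
  assumes H: "\<And>i j. i < n \<Longrightarrow> j < n \<Longrightarrow> mmult n H H i j = mident i j" and j: "j < n"
  shows "(\<Sum>a<n. H j a * (\<Sum>l<n. H a l * g l)) = (g j :: 'a::comm_semiring_1)"
proof -
  have "(\<Sum>a<n. H j a * (\<Sum>l<n. H a l * g l)) = (\<Sum>l<n. (\<Sum>a<n. H j a * H a l) * g l)"
    unfolding sum_distrib_left sum_distrib_right by (subst sum.swap) (simp add: mult_ac)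
  also have "\<dots> = (\<Sum>l<n. mident j l * g l)"
    using j by (intro sum.cong refl) (simp add: H[unfolded mmult_def])
  finally show ?thesis using j by (simp add: sum_mident_left)
qed

lemma vmult_conj_diag:
  "vmult n b (conj_diag n H d) = vmult n (\<lambda>a. vmult n b H a * d a) H"
  unfolding vmult_def conj_diag_def sum_distrib_left sum_distrib_right
  by (rule ext, subst sum.swap) (simp add: mult_ac)

lemma det_lin_obs_mat_conj_diag_ne_0:
  fixes H :: "nat \<Rightarrow> nat \<Rightarrow> real"
  assumes H: "\<And>i j. i < n \<Longrightarrow> j < n \<Longrightarrow> mmult n H H i j = mident i j"
    and w: "\<And>a. a < n \<Longrightarrow> vmult n b H a \<noteq> 0"
    and \<mu>: "inj_on \<mu> {..<n}" and t: "inj_on t {..<n}"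
  shows "Determinant.det (lin_obs_mat n b (\<lambda>k. conj_diag n H (\<lambda>a. exp (t k * \<mu> a)))) \<noteq> 0"
  unfolding lin_obs_mat_def det_mat_ne_0_iff
proof (intro allI impI)
  fix g j
  assume z: "\<forall>k<n. (\<Sum>j<n. vmult n b (conj_diag n H (\<lambda>a. exp (t k * \<mu> a))) j * g j) = 0"
    and j: "j < n"
  define Hg where "Hg a = (\<Sum>l<n. H a l * g l)" for a
  have "\<forall>a\<in>{..<n}. vmult n b H a * Hg a = 0"
  proof (rule exp_sum_eq_0_imp_coeffs_eq_0[where S="t ` {..<n}"])
    show "card {..<n} \<le> card (t ` {..<n})" using t by (simp add: card_image)
    fix s assume "s \<in> t ` {..<n}"
    then obtain k where k: "k < n" "s = t k" by auto
    have "(\<Sum>j<n. vmult n b (conj_diag n H (\<lambda>a. exp (t k * \<mu> a))) j * g j) =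
        (\<Sum>j<n. \<Sum>a<n. vmult n b H a * exp (t k * \<mu> a) * H a j * g j)"
      unfolding vmult_conj_diag by (simp add: vmult_def sum_distrib_right)
    also have "\<dots> = (\<Sum>a<n. \<Sum>j<n. vmult n b H a * exp (t k * \<mu> a) * H a j * g j)"
      by (rule sum.swap)
    also have "\<dots> = (\<Sum>a<n. vmult n b H a * Hg a * exp (\<mu> a * s))"
      by (simp add: Hg_def k(2) sum_distrib_left mult_ac)
    finally show "(\<Sum>a<n. vmult n b H a * Hg a * exp (\<mu> a * s)) = 0" using z k(1) by simp
  qed (use \<mu> in auto)
  then have "Hg a = 0" if "a < n" for a using w that by simp
  then show "g j = 0"
    using involution_apply_twice[OF H j, of g] by (simp add: Hg_def)
qed

lemma det_quad_obs_mat_conj_diag_ne_0: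
  fixes H :: "nat \<Rightarrow> nat \<Rightarrow> real"
  assumes e: "bij_betw e {..<N} (upper_pairs n)"
    and H: "\<And>i j. i < n \<Longrightarrow> j < n \<Longrightarrow> mmult n H H i j = mident i j"
    and w: "\<And>a. a < n \<Longrightarrow> vmult n b H a \<noteq> 0"
    and \<mu>: "inj_on (\<lambda>x. \<mu> (fst x) + \<mu> (snd x)) (upper_pairs n)" and t: "inj_on t {..<N}"
  shows "Determinant.det (quad_obs_mat N n b e (\<lambda>k. conj_diag n H (\<lambda>a. exp (t k * \<mu> a)))) \<noteq> 0"
proof (rule iffD2[OF det_quad_obs_mat_ne_0_iff[OF e]], intro allI impI)
  fix D i j
  assume sym: "\<forall>i j. D i j = D j i"
    and Q: "\<forall>k<N. qform n (vmult n b (conj_diag n H (\<lambda>a. exp (t k * \<mu> a)))) D = 0"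
    and ij: "i < n" "j < n"
  define P where "P = (\<lambda>p q. \<Sum>a<n. \<Sum>c<n. H p a * H q c * D a c)"
  have Psym: "P p q = P q p" for p q
    unfolding P_def using sym by (subst sum.swap) (simp add: mult_ac)
  have "vmult n b H p * vmult n b H q * P p q = 0" if "p < n" "q < n" for p q
  proof (rule exp_qform_vanishing_imp_zero[OF Psym \<mu>, where S="t ` {..<N}"])
    show "card (upper_pairs n) \<le> card (t ` {..<N})"
      using t bij_betw_same_card[OF e] by (simp add: card_image)
    fix s assume "s \<in> t ` {..<N}"
    then obtain k where k: "k < N" "s = t k" by auto
    show "qform n (\<lambda>p. vmult n b H p * exp (s * \<mu> p)) P = 0"
      using Q k by (simp add: vmult_conj_diag qform_vmult P_def)
  qed (use that in auto)
  then have "P p q = 0" if "p < n" "q < n" for p q using w that by simp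
  then have "(\<Sum>p<n. \<Sum>q<n. H i p * H j q * P p q) = 0" by simp
  then show "D i j = 0"
    using involution_congruence[OF H ij, of D] by (simp add: P_def)
qed

lemma inj_on_pow2_pair_sums: "inj_on (\<lambda>x. (2::real) ^ fst x + 2 ^ snd x) (upper_pairs n)"
proof (rule inj_onI)
  fix x y assume x: "x \<in> upper_pairs n" and y: "y \<in> upper_pairs n"
    and eq: "(2::real) ^ fst x + 2 ^ snd x = 2 ^ fst y + 2 ^ snd y"
  have bnd: "(2::real) ^ j < 2 ^ i + 2 ^ j \<and> (2::real) ^ i + 2 ^ j \<le> 2 ^ Suc j" if "i \<le> j" for i j :: nat
    using power_increasing[OF that, of "2::real"] by auto
  have le: "fst x \<le> snd x" "fst y \<le> snd y" using x y by (auto simp: upper_pairs_def)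
  have "snd x = snd y"
  proof (rule ccontr)
    assume "snd x \<noteq> snd y"
    then consider "Suc (snd x) \<le> snd y" | "Suc (snd y) \<le> snd x" by linarith
    then show False
      by cases (use power_increasing[of _ _ "2::real"] bnd[OF le(1)] bnd[OF le(2)] eq in \<open>fastforce+\<close>)
  qed
  moreover from this have "fst x = fst y" using eq by simp
  ultimately show "x = y" by (simp add: prod_eq_iff)
qed

lemma obs_det_mexp_witness:
  assumes n: "0 < n" "n \<le> N" and b: "(\<Sum>i<n. (b i)\<^sup>2) = 1"
    and e: "bij_betw e {..<N} (upper_pairs n)" and t: "inj_on t {..<N}"
  obtains C where "obs_det N n b e (\<lambda>k. mexp n (\<lambda>i j. t k * C i j)) \<noteq> 0"
proof -
  define w where "w i = 1 / sqrt (real n)" for i :: nat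
  define H where "H = householder n (\<lambda>i. b i - w i)"
  define \<mu> where "\<mu> a = (2::real) ^ a" for a :: nat
  have H: "mmult n H H i j = mident i j" if "i < n" "j < n" for i j
    using that by (simp add: H_def mmult_householder_self)
  have "(\<Sum>i<n. (w i)\<^sup>2) = 1" using n by (simp add: w_def power_divide)
  then have w: "vmult n b H a \<noteq> 0" if "a < n" for a
    using vmult_householder[of b n w, OF _ that] b n by (simp add: H_def w_def)
  have X: "mexp n (\<lambda>i j. t k * conj_diag n H \<mu> i j) i j = conj_diag n H (\<lambda>a. exp (t k * \<mu> a)) i j"
    if "i < n" "j < n" for k i j
  proof -
    have "(\<lambda>i j. t k * conj_diag n H \<mu> i j) = conj_diag n H (\<lambda>a. t k * \<mu> a)"
      by (simp add: fun_eq_iff conj_diag_def sum_distrib_left mult_ac)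
    then show ?thesis using mexp_conj_diag[OF H that] by simp
  qed
  have "inj_on \<mu> {..<n}" by (simp add: \<mu>_def inj_on_def)
  moreover have "inj_on t {..<n}" using t by (rule inj_on_subset) (use n(2) in auto)
  moreover have "inj_on (\<lambda>x. \<mu> (fst x) + \<mu> (snd x)) (upper_pairs n)"
    using inj_on_pow2_pair_sums by (simp add: \<mu>_def)
  ultimately have "obs_det N n b e (\<lambda>k. conj_diag n H (\<lambda>a. exp (t k * \<mu> a))) \<noteq> 0"
    unfolding obs_det_def
    using det_quad_obs_mat_conj_diag_ne_0[OF e H w _ t] det_lin_obs_mat_conj_diag_ne_0[OF H w] by simp
  moreover have "obs_det N n b e (\<lambda>k. mexp n (\<lambda>i j. t k * conj_diag n H \<mu> i j)) =
      obs_det N n b e (\<lambda>k. conj_diag n H (\<lambda>a. exp (t k * \<mu> a)))"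
    by (rule obs_det_cong) (rule X)
  ultimately show thesis using that by metis
qed

lemma finite_coord_index: "finite (coord_index m)"
  unfolding coord_index_def
  by (intro finite_UnI finite_imageI finite_cartesian_product
      finite_subset[of "{(i, j). i \<le> j \<and> j < 2*m}" "{..<2*m} \<times> {..<2*m}"]) auto

section \<open>Genericity\<close>

definition complex_obs_det ::
    "nat \<Rightarrow> (nat \<Rightarrow> real) \<Rightarrow> (nat \<Rightarrow> real) \<Rightarrow> (nat \<Rightarrow> nat \<times> nat) \<Rightarrow> ((nat \<times> nat) + (nat \<times> nat) \<Rightarrow> complex) \<Rightarrow> complex" where
  "complex_obs_det m b t e z = obs_det (m*(2*m+1)) (2*m) (\<lambda>i. of_real (b i)) e
     (\<lambda>k. cmexp (2*m) (\<lambda>i j. of_real (t k) * z (Inl (i, j))))"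

lemma complex_obs_det_of_real:
  "complex_obs_det m b t e (\<lambda>x. of_real (p x)) = of_real (obs_det (m*(2*m+1)) (2*m) b e (\<lambda>k. Xt m (Cmat p) (t k)))"
proof -
  have "cmexp (2*m) (\<lambda>i j. of_real (t k) * of_real (p (Inl (i, j)))) i j = of_real (Xt m (Cmat p) (t k) i j)"
    if "i < 2*m" for k i j
    using cmexp_of_real[OF that, of "\<lambda>i j. t k * p (Inl (i, j))"] by (simp add: Xt_def Cmat_def)
  then show ?thesis
    unfolding complex_obs_det_def obs_det_of_real[symmetric] by (intro obs_det_cong) simp
qed

lemma complex_obs_det_holomorphic:
  "(\<lambda>w. complex_obs_det m b t e (z(x := w))) holomorphic_on UNIV"
  unfolding complex_obs_det_def
proof (rule obs_det_holomorphic)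
  fix k i j assume i: "i < 2*m"
  define A where "A i j = (if Inl (i, j) = x then 0 else complex_of_real (t k) * z (Inl (i, j)))" for i j
  define B where "B i j = (if Inl (i, j) = x then complex_of_real (t k) else 0)" for i j
  have "(\<lambda>i j. of_real (t k) * (z(x := w)) (Inl (i, j))) = (\<lambda>i j. A i j + B i j * w)" for w
    by (auto simp: A_def B_def fun_eq_iff)
  then show "(\<lambda>w. cmexp (2*m) (\<lambda>i j. of_real (t k) * (z(x := w)) (Inl (i, j))) i j) holomorphic_on UNIV"
    using cmexp_affine_holomorphic[OF i, of A B j] by simp
qed

lemma borel_measurable_obs_det_Xt:
  "(\<lambda>p. obs_det N (2*m) b e (\<lambda>k. Xt m (Cmat p) (t k))) \<in> borel_measurable (coord_measure m)"
  unfolding Xt_def Cmat_def coord_measure_def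
  by (intro borel_measurable_obs_det borel_measurable_mexp borel_measurable_times
      borel_measurable_const borel_measurable_PiM_component)

lemma obs_det_Xt_witness:
  assumes m: "m \<ge> 1" and b: "(\<Sum>i<2*m. (b i)\<^sup>2) = 1" and t: "inj_on t {..<m*(2*m+1)}"
    and e: "bij_betw e {..<m*(2*m+1)} (upper_pairs (2*m))"
  obtains x0 where "x0 \<in> PiE (coord_index m) (\<lambda>_. UNIV)"
    and "obs_det (m*(2*m+1)) (2*m) b e (\<lambda>k. Xt m (Cmat x0) (t k)) \<noteq> 0"
proof -
  obtain C where C: "obs_det (m*(2*m+1)) (2*m) b e (\<lambda>k. mexp (2*m) (\<lambda>i j. t k * C i j)) \<noteq> 0"
    using obs_det_mexp_witness[OF _ _ b e t] m by fastforce
  define x0 where "x0 = restrict (\<lambda>x. case x of Inl q \<Rightarrow> C (fst q) (snd q) | Inr _ \<Rightarrow> 0) (coord_index m)"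
  have "Xt m (Cmat x0) (t k) i j = mexp (2*m) (\<lambda>i j. t k * C i j) i j" if "i < 2*m" for k i j
    unfolding Xt_def by (rule mexp_cong[OF _ that]) (auto simp: Cmat_def x0_def coord_index_def)
  then have "obs_det (m*(2*m+1)) (2*m) b e (\<lambda>k. Xt m (Cmat x0) (t k)) \<noteq> 0"
    using C by (subst obs_det_cong) auto
  moreover have "x0 \<in> PiE (coord_index m) (\<lambda>_. UNIV)" by (simp add: x0_def)
  ultimately show thesis using that by blast
qed

lemma null_sets_obs_det_Xt_eq_0:
  assumes m: "m \<ge> 1" and b: "(\<Sum>i<2*m. (b i)\<^sup>2) = 1" and t: "inj_on t {..<m*(2*m+1)}"
    and e: "bij_betw e {..<m*(2*m+1)} (upper_pairs (2*m))"
  shows "{p \<in> space (coord_measure m). obs_det (m*(2*m+1)) (2*m) b e (\<lambda>k. Xt m (Cmat p) (t k)) = 0}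
           \<in> null_sets (coord_measure m)"
proof -
  obtain x0 where x0: "x0 \<in> PiE (coord_index m) (\<lambda>_. UNIV)"
    and "obs_det (m*(2*m+1)) (2*m) b e (\<lambda>k. Xt m (Cmat x0) (t k)) \<noteq> 0"
    using obs_det_Xt_witness[OF assms] .
  then have "complex_obs_det m b t e (\<lambda>x. of_real (x0 x)) \<noteq> 0"
    by (simp add: complex_obs_det_of_real)
  moreover have "(\<lambda>p. complex_obs_det m b t e (\<lambda>x. of_real (p x))) \<in> borel_measurable (coord_measure m)"
    unfolding complex_obs_det_of_real by (rule measurable_compose[OF borel_measurable_obs_det_Xt borel_measurable_of_real])
  ultimately show ?thesis
    using null_sets_zeros_separately_entire[OF finite_coord_index complex_obs_det_holomorphic _ x0]
    by (simp add: complex_obs_det_of_real coord_measure_def)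
qed

theorem mainTheorem2:
  fixes m :: nat and b :: "nat \<Rightarrow> real" and t :: "nat \<Rightarrow> real"
  assumes "m \<ge> 1"
    and "(\<Sum>i<2*m. (b i)\<^sup>2) = 1"
    and "inj_on t {..<m*(2*m+1)}"
    and "\<forall>k<m*(2*m+1). t k \<ge> 0"
  shows "AE p in coord_measure m.
           in_GG m (Cmat p) (Bmat p) \<longrightarrow>
             inj_on (\<lambda>G. map (\<lambda>k. bilin (2*m) b
                          (mmult (2*m) (mmult (2*m) (Xt m (Cmat p) (t k)) G) (mtrans (Xt m (Cmat p) (t k)))) b)
                        [0..<m*(2*m+1)])
                    (sym_mats (2*m))
           \<and> inj_on (\<lambda>d. map (\<lambda>k. bilin (2*m) b (Xt m (Cmat p) (t k)) d) [0..<2*m])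
                    (vecs (2*m))"
proof -
  let ?N = "m*(2*m+1)"
  have "card (upper_pairs (2*m)) = ?N" using card_upper_pairs[of "2*m"] by simp
  then obtain e where e: "bij_betw e {..<?N} (upper_pairs (2*m))"
    using finite_same_card_bij[OF _ finite_upper_pairs] by (metis card_lessThan finite_lessThan)
  have "inj_on (\<lambda>G. map (\<lambda>k. bilin (2*m) b (mmult (2*m) (mmult (2*m) (Xt m (Cmat p) (t k)) G)
              (mtrans (Xt m (Cmat p) (t k)))) b) [0..<?N]) (sym_mats (2*m))
        \<and> inj_on (\<lambda>d. map (\<lambda>k. bilin (2*m) b (Xt m (Cmat p) (t k)) d) [0..<2*m]) (vecs (2*m))"
    if "obs_det ?N (2*m) b e (\<lambda>k. Xt m (Cmat p) (t k)) \<noteq> 0" for p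
    using that inj_on_sym_mats_if_det_quad_obs_mat[OF e] inj_on_vecs_if_det_lin_obs_mat
    by (simp add: obs_det_def)
  then show ?thesis
    by (intro AE_I'[OF null_sets_obs_det_Xt_eq_0[OF assms(1-3) e]]) auto
qed

end
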